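(* Let $\mathcal{Z}\subset\mathbb{R}^n$ be closed and convex, and let $f:\mathcal{Z}\to\mathbb{R}^n$ be such that $-f$ is $\beta$-strongly monotone and globally $L$-Lipschitz. Consider, for $K>0$, the anti-windup approximation $$\dot z=F_K(z):=f(P_\mathcal{Z}(z))-\tfrac1K\big(z-P_\mathcal{Z}(z)\big),\qquad z\in\mathbb{R}^n.$$ Then for all $0<K<4\beta/L^2$, every trajectory of this system converges to an equilibrium point $z^\star$, which is unique, and $P_\mathcal{Z}(z^\star)$ is the unique equilibrium of the projected dynamical system $\dot z=\Pi_\mathcal{Z}[f](z)$, $z\in\mathcal{Z}$.
   Context: $P_\mathcal{Z}$ is the Euclidean projection onto $\mathcal{Z}$. A map $F$ is $\beta$-strongly monotone on $\mathcal{C}$ if $\langle v-v',x-x'\rangle\ge\beta\|x-x'\|^2$ for all $x,x'\in\mathcal{C}$, $v\in F(x)$, $v'\in F(x')$. $T_x\mathcal{Z}$ is the tangent cone of $\mathcal{Z}$ at $x$, and $\Pi_\mathcal{Z}[f](x):=\arg\min_{v\in T_x\mathcal{Z}}\|v-f(x)\|$ for $x\in\mathcal{Z}$. An equilibrium of the projected system is a point $\bar z\in\mathcal{Z}$ such that the constant trajectory at $\bar z$ is a (Carathéodory) solution, i.e., $\Pi_\mathcal{Z}[f](\bar z)=0$. *)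

theory Defs
  imports "HOL-Analysis.Analysis"
begin

text \<open>Euclidean projection onto Z: the library's closest_point Z.\<close>

definition strongly_monotone_on :: "real \<Rightarrow> 'a::real_inner set \<Rightarrow> ('a \<Rightarrow> 'a) \<Rightarrow> bool" where
  "strongly_monotone_on \<beta> C F \<longleftrightarrow>
     (\<forall>x\<in>C. \<forall>x'\<in>C. inner (F x - F x') (x - x') \<ge> \<beta> * (norm (x - x'))\<^sup>2)"

definition tangent_cone :: "'a::real_normed_vector set \<Rightarrow> 'a \<Rightarrow> 'a set" where
  "tangent_cone Z x = closure {c *\<^sub>R (y - x) | c y. c > 0 \<and> y \<in> Z}"

definition proj_field :: "'a::euclidean_space set \<Rightarrow> ('a \<Rightarrow> 'a) \<Rightarrow> 'a \<Rightarrow> 'a" where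
  "proj_field Z f x = closest_point (tangent_cone Z x) (f x)"

definition proj_equilibrium :: "'a::euclidean_space set \<Rightarrow> ('a \<Rightarrow> 'a) \<Rightarrow> 'a \<Rightarrow> bool" where
  "proj_equilibrium Z f z \<longleftrightarrow> z \<in> Z \<and> proj_field Z f z = 0"

definition antiwindup_field :: "'a::euclidean_space set \<Rightarrow> ('a \<Rightarrow> 'a) \<Rightarrow> real \<Rightarrow> 'a \<Rightarrow> 'a" where
  "antiwindup_field Z f K z = f (closest_point Z z) - (1 / K) *\<^sub>R (z - closest_point Z z)"

definition is_trajectory :: "('a::real_normed_vector \<Rightarrow> 'a) \<Rightarrow> (real \<Rightarrow> 'a) \<Rightarrow> bool" where
  "is_trajectory F x \<longleftrightarrow> (\<forall>t\<ge>0. (x has_vector_derivative F (x t)) (at t within {0..}))"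

end

theory Submission
  imports Defs "HOL-Real_Asymp.Real_Asymp"
begin

(* Write P for the projection onto Z and r = z - P z for the residual. Since
   <r - r', P z - P z'> >= 0, the inner product <F_K z - F_K z', z - z'> is bounded above by minus
   the quadratic form beta a^2 - L a b + b^2 / K in a = |P z - P z'| and b = |r - r'|, which is
   positive definite precisely when K < 4 beta / L^2. Hence -F_K is strongly monotone on the whole
   space and F_K is Lipschitz, so a short explicit Euler step is a contraction whose fixed point is
   the unique zero zs, and |z(t) - zs|^2 decays exponentially along every trajectory. At zs,
   f (P zs) = (zs - P zs) / K is a normal vector of Z at P zs: this is the variational inequality
   characterising equilibria of the projected system, whose solution is unique by strong
   monotonicity of -f. *)

lemma closest_point_eq_iff_inner_nonpos:
  fixes S :: "'a::{real_inner,heine_borel} set"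
  assumes "convex S" "closed S" "x \<in> S"
  shows "closest_point S a = x \<longleftrightarrow> (\<forall>y\<in>S. inner (a - x) (y - x) \<le> 0)"
proof
  assume "closest_point S a = x"
  then show "\<forall>y\<in>S. inner (a - x) (y - x) \<le> 0"
    using closest_point_dot[OF assms(1,2)] by blast
next
  assume obtuse: "\<forall>y\<in>S. inner (a - x) (y - x) \<le> 0"
  have "dist a x \<le> dist a y" if "y \<in> S" for y
  proof -
    have "(norm (a - y))\<^sup>2 = (norm (a - x))\<^sup>2 - 2 * inner (a - x) (y - x) + (norm (y - x))\<^sup>2"
      by (simp add: power2_norm_eq_inner inner_diff inner_commute)
    then have "(norm (a - x))\<^sup>2 \<le> (norm (a - y))\<^sup>2"
      using obtuse that by (smt (verit) zero_le_power2)
    then show ?thesis by (simp add: dist_norm power2_le_iff_abs_le)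
  qed
  then show "closest_point S a = x"
    using closest_point_unique[OF assms] by simp
qed

lemma tangent_cone_eq_closure_cone_hull:
  assumes "z \<in> Z"
  shows "tangent_cone Z z = closure (cone hull ((\<lambda>y. y - z) ` Z))"
proof -
  have "{c *\<^sub>R (y - z) | c y. c > 0 \<and> y \<in> Z} = cone hull ((\<lambda>y. y - z) ` Z)"
  proof
    show "{c *\<^sub>R (y - z) | c y. c > 0 \<and> y \<in> Z} \<subseteq> cone hull ((\<lambda>y. y - z) ` Z)"
      unfolding cone_hull_expl by force
  next
    show "cone hull ((\<lambda>y. y - z) ` Z) \<subseteq> {c *\<^sub>R (y - z) | c y. c > 0 \<and> y \<in> Z}"
    proof
      fix v assume "v \<in> cone hull ((\<lambda>y. y - z) ` Z)"
      then obtain c y where v: "v = c *\<^sub>R (y - z)" "c \<ge> 0" "y \<in> Z"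
        unfolding cone_hull_expl by auto
      show "v \<in> {c *\<^sub>R (y - z) | c y. c > 0 \<and> y \<in> Z}"
      proof (cases "c = 0")
        case True
        then have "v = 1 *\<^sub>R (z - z)" using v by simp
        then show ?thesis using assms zero_less_one by blast
      next
        case False
        then show ?thesis using v by force
      qed
    qed
  qed
  then show ?thesis unfolding tangent_cone_def by simp
qed

lemma convex_tangent_cone:
  assumes "convex Z" "z \<in> Z"
  shows "convex (tangent_cone Z z)"
  unfolding tangent_cone_eq_closure_cone_hull[OF assms(2)]
  by (intro convex_closure convex_cone_hull convex_translation_subtract assms(1))

lemma closed_tangent_cone: "closed (tangent_cone Z z)"
  unfolding tangent_cone_def by simp

lemma diff_mem_tangent_cone:
  assumes "y \<in> Z"
  shows "y - z \<in> tangent_cone Z z"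
proof -
  have "1 *\<^sub>R (y - z) \<in> {c *\<^sub>R (y - z) | c y. c > 0 \<and> y \<in> Z}"
    using assms zero_less_one by blast
  then show ?thesis unfolding tangent_cone_def using closure_subset by force
qed

lemma tangent_cone_inner_nonpos:
  assumes "\<And>y. y \<in> Z \<Longrightarrow> inner a (y - z) \<le> 0" and "v \<in> tangent_cone Z z"
  shows "inner a v \<le> 0"
proof -
  have "{c *\<^sub>R (y - z) | c y. c > 0 \<and> y \<in> Z} \<subseteq> {v. inner a v \<le> 0}"
    using assms(1) by (auto simp: mult_nonneg_nonpos)
  then have "tangent_cone Z z \<subseteq> {v. inner a v \<le> 0}"
    unfolding tangent_cone_def by (intro closure_minimal) (auto simp: closed_halfspace_le)
  then show ?thesis using assms(2) by auto
qed

lemma proj_equilibrium_iff: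
  fixes Z :: "'a::euclidean_space set"
  assumes "convex Z"
  shows "proj_equilibrium Z f z \<longleftrightarrow> z \<in> Z \<and> (\<forall>y\<in>Z. inner (f z) (y - z) \<le> 0)"
proof (cases "z \<in> Z")
  case True
  have "0 \<in> tangent_cone Z z"
    using diff_mem_tangent_cone[OF True, of z] by simp
  then have "proj_field Z f z = 0 \<longleftrightarrow> (\<forall>v\<in>tangent_cone Z z. inner (f z) v \<le> 0)"
    unfolding proj_field_def
    by (simp add: closest_point_eq_iff_inner_nonpos[OF convex_tangent_cone[OF assms True]
        closed_tangent_cone])
  also have "\<dots> \<longleftrightarrow> (\<forall>y\<in>Z. inner (f z) (y - z) \<le> 0)"
    using diff_mem_tangent_cone tangent_cone_inner_nonpos by metis
  finally show ?thesis unfolding proj_equilibrium_def using True by simp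
qed (simp add: proj_equilibrium_def)

lemma strongly_monotone_on_uminusD:
  fixes F :: "'a::real_inner \<Rightarrow> 'a"
  assumes "strongly_monotone_on \<mu> C (\<lambda>x. - F x)" "x \<in> C" "x' \<in> C"
  shows "inner (F x - F x') (x - x') \<le> - \<mu> * (norm (x - x'))\<^sup>2"
proof -
  have "\<mu> * (norm (x - x'))\<^sup>2 \<le> inner (- F x - - F x') (x - x')"
    using assms unfolding strongly_monotone_on_def by blast
  then show ?thesis by (simp add: inner_diff_left)
qed

lemma variational_inequality_unique:
  fixes Z :: "'a::real_inner set"
  assumes "strongly_monotone_on \<beta> Z (\<lambda>x. - f x)" "\<beta> > 0"
    and z: "z \<in> Z" "\<forall>y\<in>Z. inner (f z) (y - z) \<le> 0"
    and w: "w \<in> Z" "\<forall>y\<in>Z. inner (f w) (y - w) \<le> 0"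
  shows "z = w"
proof -
  have "\<beta> * (norm (z - w))\<^sup>2 \<le> inner (- f z - - f w) (z - w)"
    using assms(1) z w unfolding strongly_monotone_on_def by blast
  also have "\<dots> = inner (f z) (w - z) + inner (f w) (z - w)"
    by (simp add: inner_diff_left inner_diff_right algebra_simps)
  also have "\<dots> \<le> 0"
    using z w by (simp add: add_nonpos_nonpos)
  finally show ?thesis
    using \<open>\<beta> > 0\<close> by (simp add: mult_le_0_iff)
qed

lemma quadratic_form_coercive:
  fixes \<beta> L K :: real
  assumes "\<beta> > 0" "L > 0" "K > 0" "K < 4 * \<beta> / L\<^sup>2"
  shows "\<exists>c>0. \<forall>a b. c * (a\<^sup>2 + b\<^sup>2) \<le> \<beta> * a\<^sup>2 - L * a * b + b\<^sup>2 / K"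
proof -
  define K' where "K' = (K + 4 * \<beta> / L\<^sup>2) / 2"
  have "K < K'" "K' < 4 * \<beta> / L\<^sup>2"
    using assms unfolding K'_def by auto
  then have K': "K' > 0" "\<beta> - L\<^sup>2 * K' / 4 > 0" "1 / K - 1 / K' > 0"
    using assms by (auto simp: field_simps)
  define c where "c = min (\<beta> - L\<^sup>2 * K' / 4) (1 / K - 1 / K')"
  have "c * (a\<^sup>2 + b\<^sup>2) \<le> \<beta> * a\<^sup>2 - L * a * b + b\<^sup>2 / K" for a b
  proof -
    \<comment> \<open>Young's inequality with weight K'\<close>
    have "L * a * b * K' \<le> (L\<^sup>2 * K' / 4 * a\<^sup>2 + b\<^sup>2 / K') * K'"
      using K'(1) sum_squares_ge_zero[of "L * K' * a / 2 - b" 0]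
      by (simp add: power2_eq_square algebra_simps)
    then have "L * a * b \<le> L\<^sup>2 * K' / 4 * a\<^sup>2 + b\<^sup>2 / K'"
      using K'(1) by simp
    moreover have "c * (a\<^sup>2 + b\<^sup>2) \<le> (\<beta> - L\<^sup>2 * K' / 4) * a\<^sup>2 + (1 / K - 1 / K') * b\<^sup>2"
      by (simp add: distrib_left add_mono mult_right_mono c_def)
    ultimately show ?thesis by (simp add: algebra_simps)
  qed
  moreover have "c > 0" using K' by (simp add: c_def)
  ultimately show ?thesis by blast
qed

lemma closest_point_residual_inner_nonneg:
  fixes S :: "'a::{real_inner,heine_borel} set"
  assumes "convex S" "closed S" "S \<noteq> {}"
  shows "0 \<le> inner ((z - closest_point S z) - (z' - closest_point S z'))
                     (closest_point S z - closest_point S z')"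
proof -
  have "inner (z - closest_point S z) (closest_point S z' - closest_point S z) \<le> 0"
    "inner (z' - closest_point S z') (closest_point S z - closest_point S z') \<le> 0"
    using assms by (simp_all add: closest_point_dot closest_point_in_set)
  then show ?thesis
    by (simp add: inner_diff_left inner_diff_right inner_commute algebra_simps)
qed

lemma antiwindup_field_inner_bound:
  fixes Z :: "'a::euclidean_space set" and z z' :: 'a
  assumes "convex Z" "closed Z" "Z \<noteq> {}"
    and "strongly_monotone_on \<beta> Z (\<lambda>x. - f x)" "L-lipschitz_on Z f" "K > 0"
  defines "a \<equiv> norm (closest_point Z z - closest_point Z z')"
    and "b \<equiv> norm ((z - closest_point Z z) - (z' - closest_point Z z'))"
  shows "inner (antiwindup_field Z f K z - antiwindup_field Z f K z') (z - z')
           \<le> - (\<beta> * a\<^sup>2 - L * a * b + b\<^sup>2 / K)"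
proof -
  define p p' where "p = closest_point Z z" and "p' = closest_point Z z'"
  define r r' where "r = z - p" and "r' = z' - p'"
  have pZ: "p \<in> Z" "p' \<in> Z"
    unfolding p_def p'_def using assms by (auto intro: closest_point_in_set)
  have mono: "inner (f p - f p') (p - p') \<le> - \<beta> * a\<^sup>2"
    using strongly_monotone_on_uminusD[OF assms(4) pZ] by (simp add: a_def p_def p'_def)
  have "inner (f p - f p') (r - r') \<le> norm (f p - f p') * b"
    unfolding b_def r_def r'_def p_def p'_def by (rule norm_cauchy_schwarz)
  also have "\<dots> \<le> L * a * b"
    using lipschitz_on_normD[OF assms(5) pZ] unfolding a_def b_def p_def p'_def
    by (simp add: mult_right_mono)
  finally have cross: "inner (f p - f p') (r - r') \<le> L * a * b" .
  have residual: "inner (r - r') (p - p') \<ge> 0"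
    unfolding r_def r'_def p_def p'_def using closest_point_residual_inner_nonneg[OF assms(1-3)] .
  have "inner (antiwindup_field Z f K z - antiwindup_field Z f K z') (z - z')
      = inner (f p - f p') (p - p') + inner (f p - f p') (r - r')
        - (1 / K) * inner (r - r') (p - p') - (1 / K) * inner (r - r') (r - r')"
    unfolding antiwindup_field_def p_def p'_def r_def r'_def
    by (simp add: inner_add_right inner_diff_left inner_diff_right algebra_simps)
  also have "\<dots> \<le> - \<beta> * a\<^sup>2 + L * a * b - 0 - (1 / K) * b\<^sup>2"
    using mono cross residual \<open>K > 0\<close>
    by (intro diff_mono add_mono) (auto simp: b_def r_def r'_def p_def p'_def power2_norm_eq_inner)
  finally show ?thesis by simp
qed

lemma antiwindup_field_strongly_monotone:
  fixes Z :: "'a::euclidean_space set"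
  assumes "convex Z" "closed Z" "Z \<noteq> {}"
    and "strongly_monotone_on \<beta> Z (\<lambda>x. - f x)" "L-lipschitz_on Z f"
    and "\<beta> > 0" "L > 0" "K > 0" "K < 4 * \<beta> / L\<^sup>2"
  shows "\<exists>\<mu>>0. strongly_monotone_on \<mu> UNIV (\<lambda>z. - antiwindup_field Z f K z)"
proof -
  obtain c where "c > 0" and coercive: "\<And>a b. c * (a\<^sup>2 + b\<^sup>2) \<le> \<beta> * a\<^sup>2 - L * a * b + b\<^sup>2 / K"
    using quadratic_form_coercive[OF assms(6-9)] by blast
  have "c / 2 * (norm (z - z'))\<^sup>2
          \<le> inner (- antiwindup_field Z f K z - - antiwindup_field Z f K z') (z - z')" for z z'
  proof -
    define a where "a = norm (closest_point Z z - closest_point Z z')"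
    define b where "b = norm ((z - closest_point Z z) - (z' - closest_point Z z'))"
    have "z - z' = (closest_point Z z - closest_point Z z') + ((z - closest_point Z z) - (z' - closest_point Z z'))"
      by simp
    then have "norm (z - z') \<le> a + b"
      unfolding a_def b_def by (metis norm_triangle_ineq)
    then have "(norm (z - z'))\<^sup>2 \<le> (a + b)\<^sup>2" by (simp add: power_mono)
    also have "\<dots> \<le> 2 * (a\<^sup>2 + b\<^sup>2)"
      using sum_squares_ge_zero[of "a - b" 0] by (simp add: power2_eq_square algebra_simps)
    finally have "c / 2 * (norm (z - z'))\<^sup>2 \<le> c / 2 * (2 * (a\<^sup>2 + b\<^sup>2))"
      using \<open>c > 0\<close> by (intro mult_left_mono) auto
    also have "\<dots> = c * (a\<^sup>2 + b\<^sup>2)" by simp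
    also have "\<dots> \<le> \<beta> * a\<^sup>2 - L * a * b + b\<^sup>2 / K" by (rule coercive)
    also have "\<dots> \<le> - inner (antiwindup_field Z f K z - antiwindup_field Z f K z') (z - z')"
      using antiwindup_field_inner_bound[OF assms(1-5,8), of z z'] unfolding a_def b_def
      by linarith
    also have "\<dots> = inner (- antiwindup_field Z f K z - - antiwindup_field Z f K z') (z - z')"
      by (simp add: inner_diff_left)
    finally show ?thesis .
  qed
  then show ?thesis
    using \<open>c > 0\<close> unfolding strongly_monotone_on_def by (intro exI[of _ "c / 2"]) auto
qed

lemma antiwindup_field_lipschitz:
  fixes Z :: "'a::euclidean_space set"
  assumes "convex Z" "closed Z" "Z \<noteq> {}" "L-lipschitz_on Z f" "K > 0"
  shows "(L + 2 / K)-lipschitz_on UNIV (antiwindup_field Z f K)"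
proof (rule lipschitz_onI)
  fix z z' :: 'a
  define p p' where "p = closest_point Z z" and "p' = closest_point Z z'"
  have pZ: "p \<in> Z" "p' \<in> Z"
    unfolding p_def p'_def using assms by (auto intro: closest_point_in_set)
  have "norm (p - p') \<le> norm (z - z')"
    using closest_point_lipschitz[OF assms(1-3)] by (simp add: p_def p'_def dist_norm)
  moreover have "norm ((z - z') - (p - p')) \<le> norm (z - z') + norm (p - p')"
    by (rule norm_triangle_ineq4)
  ultimately have residual: "norm ((z - p) - (z' - p')) \<le> 2 * norm (z - z')"
    by (simp add: algebra_simps)
  have "antiwindup_field Z f K z - antiwindup_field Z f K z'
      = (f p - f p') - (1 / K) *\<^sub>R ((z - p) - (z' - p'))"
    unfolding antiwindup_field_def p_def p'_def by (simp add: algebra_simps)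
  then have "norm (antiwindup_field Z f K z - antiwindup_field Z f K z')
      \<le> norm (f p - f p') + norm ((1 / K) *\<^sub>R ((z - p) - (z' - p')))"
    by (metis norm_triangle_ineq4)
  also have "\<dots> \<le> L * norm (z - z') + (1 / K) * (2 * norm (z - z'))"
  proof (rule add_mono)
    show "norm (f p - f p') \<le> L * norm (z - z')"
      using lipschitz_on_normD[OF assms(4) pZ] lipschitz_on_nonneg[OF assms(4)]
        \<open>norm (p - p') \<le> norm (z - z')\<close> by (meson order.trans mult_left_mono)
    show "norm ((1 / K) *\<^sub>R ((z - p) - (z' - p'))) \<le> (1 / K) * (2 * norm (z - z'))"
      using residual \<open>K > 0\<close> by (simp add: divide_right_mono)
  qed
  finally show "dist (antiwindup_field Z f K z) (antiwindup_field Z f K z') \<le> (L + 2 / K) * dist z z'"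
    by (simp add: dist_norm algebra_simps)
next
  show "0 \<le> L + 2 / K"
    using lipschitz_on_nonneg[OF assms(4)] \<open>K > 0\<close> by simp
qed

lemma antiwindup_field_zero_imp_variational_inequality:
  fixes Z :: "'a::euclidean_space set"
  assumes "convex Z" "closed Z" "antiwindup_field Z f K z = 0" "K > 0" "y \<in> Z"
  shows "inner (f (closest_point Z z)) (y - closest_point Z z) \<le> 0"
proof -
  have "f (closest_point Z z) = (1 / K) *\<^sub>R (z - closest_point Z z)"
    using assms(3) by (simp add: antiwindup_field_def)
  moreover have "inner (z - closest_point Z z) (y - closest_point Z z) \<le> 0"
    using closest_point_dot[OF assms(1,2,5)] .
  ultimately show ?thesis
    using \<open>K > 0\<close> by (simp add: divide_nonpos_pos)
qed

lemma explicit_euler_step_contraction: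
  fixes F :: "'a::real_inner \<Rightarrow> 'a"
  assumes "strongly_monotone_on \<mu> UNIV (\<lambda>z. - F z)" "\<mu> \<ge> 0" "M-lipschitz_on UNIV F" "M > 0"
  defines "h \<equiv> \<mu> / M\<^sup>2"
  shows "(norm ((z + h *\<^sub>R F z) - (z' + h *\<^sub>R F z')))\<^sup>2 \<le> (1 - \<mu>\<^sup>2 / M\<^sup>2) * (norm (z - z'))\<^sup>2"
proof -
  define d where "d = norm (z - z')"
  have "h \<ge> 0" using assms(2) by (simp add: h_def)
  have mono: "inner (F z - F z') (z - z') \<le> - \<mu> * d\<^sup>2"
    unfolding d_def using strongly_monotone_on_uminusD[OF assms(1)] by simp
  have lip: "(norm (F z - F z'))\<^sup>2 \<le> (M * d)\<^sup>2"
    using lipschitz_on_normD[OF assms(3)] unfolding d_def by (simp add: power_mono)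
  have "(z + h *\<^sub>R F z) - (z' + h *\<^sub>R F z') = (z - z') + h *\<^sub>R (F z - F z')"
    by (simp add: algebra_simps)
  then have "(norm ((z + h *\<^sub>R F z) - (z' + h *\<^sub>R F z')))\<^sup>2
      = d\<^sup>2 + 2 * h * inner (F z - F z') (z - z') + h\<^sup>2 * (norm (F z - F z'))\<^sup>2"
    unfolding d_def power2_norm_eq_inner
    by (simp add: inner_add_left inner_add_right inner_commute power2_eq_square algebra_simps)
  also have "\<dots> \<le> d\<^sup>2 + 2 * h * (- \<mu> * d\<^sup>2) + h\<^sup>2 * (M * d)\<^sup>2"
    using mono lip \<open>h \<ge> 0\<close> by (intro add_mono order.refl mult_left_mono) auto
  also have "\<dots> = (1 - \<mu>\<^sup>2 / M\<^sup>2) * d\<^sup>2"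
    using \<open>M > 0\<close> unfolding h_def by (simp add: field_simps power2_eq_square)
  finally show ?thesis unfolding d_def .
qed

lemma strongly_monotone_lipschitz_ex1_zero:
  fixes F :: "'a::{real_inner,complete_space} \<Rightarrow> 'a"
  assumes "strongly_monotone_on \<mu> UNIV (\<lambda>z. - F z)" "\<mu> > 0" "M-lipschitz_on UNIV F"
  shows "\<exists>!z. F z = 0"
proof -
  \<comment> \<open>M' is positive and at least \<mu>, so the contraction factor q below is a genuine square root\<close>
  define M' where "M' = M + \<mu>"
  have "M \<ge> 0" using lipschitz_on_nonneg[OF assms(3)] .
  then have "\<mu> \<le> M'" "M \<le> M'" "M' > 0"
    using assms(2) by (simp_all add: M'_def)
  have lip: "M'-lipschitz_on UNIV F"
    using lipschitz_on_le[OF assms(3) \<open>M \<le> M'\<close>] .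
  define h where "h = \<mu> / M'\<^sup>2"
  define q where "q = sqrt (1 - \<mu>\<^sup>2 / M'\<^sup>2)"
  have "\<mu>\<^sup>2 \<le> M'\<^sup>2"
    using power_mono[OF \<open>\<mu> \<le> M'\<close>, of 2] assms(2) by simp
  then have ratio: "0 < \<mu>\<^sup>2 / M'\<^sup>2" "\<mu>\<^sup>2 / M'\<^sup>2 \<le> 1"
    using assms(2) \<open>M' > 0\<close> by simp_all
  then have q: "0 \<le> q" "q < 1" by (auto simp: q_def)
  define G where "G z = z + h *\<^sub>R F z" for z
  have "dist (G z) (G z') \<le> q * dist z z'" for z z'
  proof -
    have "(norm (G z - G z'))\<^sup>2 \<le> (1 - \<mu>\<^sup>2 / M'\<^sup>2) * (norm (z - z'))\<^sup>2"
      unfolding G_def h_def using explicit_euler_step_contraction[OF assms(1) _ lip \<open>M' > 0\<close>] assms(2)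
      by simp
    also have "\<dots> = (q * norm (z - z'))\<^sup>2"
      using ratio(2) by (simp add: q_def power_mult_distrib)
    finally have "norm (G z - G z') \<le> q * norm (z - z')"
      by (rule power2_le_imp_le) (use q(1) in simp)
    then show ?thesis by (simp add: dist_norm)
  qed
  then have "\<exists>!z. G z = z"
    by (intro banach_fix_type[OF q] allI)
  moreover have "G z = z \<longleftrightarrow> F z = 0" for z
    using assms(2) \<open>M' > 0\<close> by (simp add: G_def h_def)
  ultimately show ?thesis by simp
qed

lemma has_real_derivative_norm_diff_power2:
  fixes x :: "real \<Rightarrow> 'a::real_inner"
  assumes "(x has_vector_derivative v) (at t)"
  shows "((\<lambda>s. (norm (x s - c))\<^sup>2) has_real_derivative 2 * inner v (x t - c)) (at t)"
proof -
  have x: "(x has_derivative (\<lambda>h. h *\<^sub>R v)) (at t)"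
    using assms by (simp add: has_vector_derivative_def)
  show ?thesis
    unfolding has_field_derivative_def power2_norm_eq_inner
    by (rule derivative_eq_intros x refl | simp)+ (auto simp: inner_commute algebra_simps)
qed

lemma trajectory_dist_exp_bound:
  fixes F :: "'a::real_inner \<Rightarrow> 'a"
  assumes "F zs = 0" "strongly_monotone_on \<mu> UNIV (\<lambda>z. - F z)" "is_trajectory F x" "T \<ge> 0"
  shows "(norm (x T - zs))\<^sup>2 \<le> exp (- 2 * \<mu> * T) * (norm (x 0 - zs))\<^sup>2"
proof -
  define V where "V t = (norm (x t - zs))\<^sup>2" for t
  define W where "W t = exp (2 * \<mu> * t) * V t" for t
  have "W T \<le> W 0"
  proof (rule DERIV_nonpos_imp_decreasing_open[OF \<open>T \<ge> 0\<close>])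
    fix t :: real assume "0 < t" "t < T"
    then have "at t within {0..} = at t"
      by (intro at_within_interior) simp
    moreover have "(x has_vector_derivative F (x t)) (at t within {0..})"
      using assms(3) \<open>0 < t\<close> unfolding is_trajectory_def by simp
    ultimately have "(x has_vector_derivative F (x t)) (at t)" by simp
    then have "(V has_real_derivative 2 * inner (F (x t)) (x t - zs)) (at t)"
      unfolding V_def by (rule has_real_derivative_norm_diff_power2)
    then have "(W has_real_derivative exp (2 * \<mu> * t) * (2 * \<mu> * V t + 2 * inner (F (x t)) (x t - zs))) (at t)"
      unfolding W_def by (auto intro!: derivative_eq_intros simp: algebra_simps)
    moreover have "inner (F (x t)) (x t - zs) \<le> - \<mu> * V t"
      using strongly_monotone_on_uminusD[OF assms(2), of "x t" zs] assms(1) by (simp add: V_def)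
    then have "exp (2 * \<mu> * t) * (2 * \<mu> * V t + 2 * inner (F (x t)) (x t - zs)) \<le> 0"
      by (simp add: mult_nonneg_nonpos)
    ultimately show "\<exists>y. (W has_real_derivative y) (at t) \<and> y \<le> 0" by blast
  next
    have "continuous_on {0..} x"
      using assms(3) unfolding is_trajectory_def continuous_on_eq_continuous_within
      by (auto intro: has_vector_derivative_continuous)
    then have "continuous_on {0..T} x" by (rule continuous_on_subset) auto
    then show "continuous_on {0..T} W" unfolding W_def V_def by (intro continuous_intros)
  qed
  then show ?thesis
    by (simp add: W_def V_def exp_minus field_simps)
qed

lemma trajectory_tendsto_zero:
  fixes F :: "'a::real_inner \<Rightarrow> 'a"
  assumes "F zs = 0" "strongly_monotone_on \<mu> UNIV (\<lambda>z. - F z)" "\<mu> > 0" "is_trajectory F x"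
  shows "(x \<longlongrightarrow> zs) at_top"
proof -
  have bound_tendsto_0: "((\<lambda>t. exp (- 2 * \<mu> * t) * (norm (x 0 - zs))\<^sup>2) \<longlongrightarrow> 0) at_top"
    using \<open>\<mu> > 0\<close> by real_asymp
  have "((\<lambda>t. (norm (x t - zs))\<^sup>2) \<longlongrightarrow> 0) at_top"
  proof (rule tendsto_sandwich[OF _ _ tendsto_const bound_tendsto_0])
    show "\<forall>\<^sub>F t in at_top. (norm (x t - zs))\<^sup>2 \<le> exp (- 2 * \<mu> * t) * (norm (x 0 - zs))\<^sup>2"
      using eventually_ge_at_top[of 0]
      by (rule eventually_mono) (rule trajectory_dist_exp_bound[OF assms(1,2,4)])
  qed simp
  then have "((\<lambda>t. norm (x t - zs)) \<longlongrightarrow> 0) at_top"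
    using tendsto_real_sqrt by fastforce
  then show ?thesis
    by (simp add: tendsto_norm_zero_iff LIM_zero_iff)
qed

theorem theorem6p3:
  fixes Z :: "'a::euclidean_space set" and f :: "'a \<Rightarrow> 'a"
    and \<beta> L K :: real
  assumes "closed Z" and "convex Z" and "Z \<noteq> {}"
    and "\<beta> > 0" and "L > 0"
    and "strongly_monotone_on \<beta> Z (\<lambda>x. - f x)"
    and "L-lipschitz_on Z f"
    and "0 < K" and "K < 4 * \<beta> / L\<^sup>2"
  shows "\<exists>zs. antiwindup_field Z f K zs = 0
           \<and> (\<forall>z. antiwindup_field Z f K z = 0 \<longrightarrow> z = zs)
           \<and> (\<forall>x. is_trajectory (antiwindup_field Z f K) x \<longrightarrow> (x \<longlongrightarrow> zs) at_top)
           \<and> proj_equilibrium Z f (closest_point Z zs)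
           \<and> (\<forall>z. proj_equilibrium Z f z \<longrightarrow> z = closest_point Z zs)"
proof -
  let ?F = "antiwindup_field Z f K"
  obtain \<mu> where "\<mu> > 0" and mono: "strongly_monotone_on \<mu> UNIV (\<lambda>z. - ?F z)"
    using antiwindup_field_strongly_monotone[OF assms(2,1,3,6,7,4,5,8,9)] by blast
  moreover have "(L + 2 / K)-lipschitz_on UNIV ?F"
    using antiwindup_field_lipschitz[OF assms(2,1,3,7,8)] .
  ultimately obtain zs where zero: "?F zs = 0" and unique: "\<forall>z. ?F z = 0 \<longrightarrow> z = zs"
    by (metis strongly_monotone_lipschitz_ex1_zero)
  let ?p = "closest_point Z zs"
  have "?p \<in> Z"
    using assms(1,3) by (rule closest_point_in_set)
  moreover have vi: "\<forall>y\<in>Z. inner (f ?p) (y - ?p) \<le> 0"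
    using antiwindup_field_zero_imp_variational_inequality[OF assms(2,1) zero assms(8)] by blast
  ultimately have "proj_equilibrium Z f ?p"
    using proj_equilibrium_iff[OF assms(2)] by blast
  moreover have "z = ?p" if "proj_equilibrium Z f z" for z
    using variational_inequality_unique[OF assms(6,4)] \<open>?p \<in> Z\<close> vi that
    by (auto simp: proj_equilibrium_iff[OF assms(2)])
  moreover have "(x \<longlongrightarrow> zs) at_top" if "is_trajectory ?F x" for x
    using trajectory_tendsto_zero[OF zero mono \<open>\<mu> > 0\<close> that] .
  ultimately show ?thesis
    using zero unique by blast
qed

end
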